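(* Let $n\ge4$. Let $U_n$ be the array obtained from $M_n$ by decreasing its $(2,2,2)$-entry by $1$ (all other entries unchanged). Then $U_n\in\mathcal C_n$, $U_n$ covers the minimum element $M_n$ in $(\mathcal C_n,\preceq)$ (so $U_n$ is join-irreducible), $\Xi^{-1}(U_n)_{2,2,2}=-1$, and hence $U_n\ne\Xi(H(L))$ for every Latin square $L\in\mathcal L_n$. Consequently $(\mathcal C_n,\preceq)$ is not the Dedekind–MacNeille completion of its subposet $\{\Xi(H(L)):L\in\mathcal L_n\}$.
   Context: Let $[n]=\{1,\dots,n\}$, $[0,n]=\{0,\dots,n\}$. A corner-sum hypermatrix of order $n$ is an integer array $C=(C_{i,j,k})_{i,j,k\in[0,n]}$ such that for all $i,j\in[0,n]$: $C_{i,j,0}=C_{i,0,j}=C_{0,i,j}=0$, $C_{i,j,n}=C_{i,n,j}=C_{n,i,j}=ij$, and for all $k\in[n]$ each of $C_{i,j,k}-C_{i,j,k-1}$, $C_{i,k,j}-C_{i,k-1,j}$, $C_{k,i,j}-C_{k-1,i,j}$ is an integer in $\{\max(0,i+j-n),\dots,\min(i,j)\}$. $\mathcal C_n$ is the set of these, ordered by $C\preceq D$ iff $C\ge D$ entrywise; its minimum is $M_n$ with $(M_n)_{i,j,k}=\min(k\min(i,j),\,ij-(n-k)\max(0,i+j-n))$. A Latin square of order $n$ is an $n\times n$ array over $[n]$ with each symbol once in each row and column; $\mathcal L_n$ is the set of them; $H(L)_{i,j,k}=1$ if $L_{i,j}=k$, else $0$. $\Xi(A)_{i,j,k}=\sum_{a\le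 i,b\le j,c\le k}A_{a,b,c}$ for $i,j,k\in[0,n]$, and $\Xi^{-1}(C)_{i,j,k}=C_{i,j,k}-C_{i-1,j,k}-C_{i,j-1,k}-C_{i,j,k-1}+C_{i-1,j-1,k}+C_{i-1,j,k-1}+C_{i,j-1,k-1}-C_{i-1,j-1,k-1}$ for $i,j,k\in[n]$. *)

theory Defs
  imports Main
begin

text \<open>Arrays indexed by [0,n]^3 are modelled as functions nat => nat => nat => int
  that vanish outside [0,n]^3.\<close>

type_synonym arr3 = "nat \<Rightarrow> nat \<Rightarrow> nat \<Rightarrow> int"

definition in_range :: "nat \<Rightarrow> nat \<Rightarrow> nat \<Rightarrow> nat \<Rightarrow> bool" where
  "in_range n i j k \<longleftrightarrow> i \<le> n \<and> j \<le> n \<and> k \<le> n"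

definition step_ok :: "nat \<Rightarrow> nat \<Rightarrow> nat \<Rightarrow> int \<Rightarrow> bool" where
  "step_ok n i j d \<longleftrightarrow> max 0 (int i + int j - int n) \<le> d \<and> d \<le> int (min i j)"

definition corner_sum :: "nat \<Rightarrow> arr3 \<Rightarrow> bool" where
  "corner_sum n C \<longleftrightarrow>
     (\<forall>i j k. \<not> in_range n i j k \<longrightarrow> C i j k = 0) \<and>
     (\<forall>i\<le>n. \<forall>j\<le>n.
        C i j 0 = 0 \<and> C i 0 j = 0 \<and> C 0 i j = 0 \<and>
        C i j n = int (i*j) \<and> C i n j = int (i*j) \<and> C n i j = int (i*j) \<and>
        (\<forall>k\<in>{1..n}.
           step_ok n i j (C i j k - C i j (k-1)) \<and>
           step_ok n i j (C i k j - C i (k-1) j) \<and>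
           step_ok n i j (C k i j - C (k-1) i j)))"

definition CS :: "nat \<Rightarrow> arr3 set" where
  "CS n = {C. corner_sum n C}"

definition prec :: "arr3 \<Rightarrow> arr3 \<Rightarrow> bool" where
  "prec C D \<longleftrightarrow> (\<forall>i j k. D i j k \<le> C i j k)"

definition Mmin :: "nat \<Rightarrow> arr3" where
  "Mmin n i j k = (if in_range n i j k then
      min (int k * int (min i j)) (int (i*j) - (int n - int k) * max 0 (int i + int j - int n))
    else 0)"

definition Uarr :: "nat \<Rightarrow> arr3" where
  "Uarr n i j k = (if (i, j, k) = (2, 2, 2) then Mmin n i j k - 1 else Mmin n i j k)"

definition covers_in :: "'a set \<Rightarrow> ('a \<Rightarrow> 'a \<Rightarrow> bool) \<Rightarrow> 'a \<Rightarrow> 'a \<Rightarrow> bool" where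
  "covers_in P le y x \<longleftrightarrow> x \<in> P \<and> y \<in> P \<and> le x y \<and> x \<noteq> y \<and>
     \<not> (\<exists>z\<in>P. le x z \<and> le z y \<and> z \<noteq> x \<and> z \<noteq> y)"

definition is_lub_in :: "'a set \<Rightarrow> ('a \<Rightarrow> 'a \<Rightarrow> bool) \<Rightarrow> 'a set \<Rightarrow> 'a \<Rightarrow> bool" where
  "is_lub_in P le A x \<longleftrightarrow> x \<in> P \<and> (\<forall>a\<in>A. le a x) \<and>
     (\<forall>y\<in>P. (\<forall>a\<in>A. le a y) \<longrightarrow> le x y)"

definition join_irreducible_in :: "'a set \<Rightarrow> ('a \<Rightarrow> 'a \<Rightarrow> bool) \<Rightarrow> 'a \<Rightarrow> bool" where
  "join_irreducible_in P le x \<longleftrightarrow> x \<in> P \<and> \<not> (\<forall>y\<in>P. le x y) \<and>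
     (\<forall>a\<in>P. \<forall>b\<in>P. is_lub_in P le {a, b} x \<longrightarrow> x = a \<or> x = b)"

definition latin_square :: "nat \<Rightarrow> (nat \<Rightarrow> nat \<Rightarrow> nat) \<Rightarrow> bool" where
  "latin_square n L \<longleftrightarrow>
     (\<forall>i\<in>{1..n}. bij_betw (\<lambda>j. L i j) {1..n} {1..n}) \<and>
     (\<forall>j\<in>{1..n}. bij_betw (\<lambda>i. L i j) {1..n} {1..n})"

definition Hmat :: "(nat \<Rightarrow> nat \<Rightarrow> nat) \<Rightarrow> arr3" where
  "Hmat L i j k = (if L i j = k then 1 else 0)"

definition Xi :: "nat \<Rightarrow> arr3 \<Rightarrow> arr3" where
  "Xi n A i j k = (if in_range n i j k then
      (\<Sum>a\<in>{1..i}. \<Sum>b\<in>{1..j}. \<Sum>c\<in>{1..k}. A a b c) else 0)"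

definition Xi_inv :: "arr3 \<Rightarrow> arr3" where
  "Xi_inv C i j k = C i j k - C (i-1) j k - C i (j-1) k - C i j (k-1)
      + C (i-1) (j-1) k + C (i-1) j (k-1) + C i (j-1) (k-1) - C (i-1) (j-1) (k-1)"

definition ub_in :: "'a set \<Rightarrow> ('a \<Rightarrow> 'a \<Rightarrow> bool) \<Rightarrow> 'a set \<Rightarrow> 'a set" where
  "ub_in S le A = {s\<in>S. \<forall>a\<in>A. le a s}"

definition lb_in :: "'a set \<Rightarrow> ('a \<Rightarrow> 'a \<Rightarrow> bool) \<Rightarrow> 'a set \<Rightarrow> 'a set" where
  "lb_in S le A = {s\<in>S. \<forall>a\<in>A. le s a}"

definition cuts :: "'a set \<Rightarrow> ('a \<Rightarrow> 'a \<Rightarrow> bool) \<Rightarrow> 'a set set" where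
  "cuts S le = {A. A \<subseteq> S \<and> A = lb_in S le (ub_in S le A)}"

definition is_DM_completion :: "'a set \<Rightarrow> ('a \<Rightarrow> 'a \<Rightarrow> bool) \<Rightarrow> 'a set \<Rightarrow> bool" where
  "is_DM_completion Q le S \<longleftrightarrow> S \<subseteq> Q \<and>
     (\<exists>\<phi>. bij_betw \<phi> Q (cuts S le) \<and>
          (\<forall>x\<in>Q. \<forall>y\<in>Q. le x y \<longleftrightarrow> \<phi> x \<subseteq> \<phi> y) \<and>
          (\<forall>p\<in>S. \<phi> p = {s\<in>S. le s p}))"

end

theory Submission
  imports Defs
begin

(*
  Along every axis-parallel line of a corner-sum array the entries run from 0 to ij with
  increments in [max(0, i+j-n), min(i, j)]; bounding from both ends shows that every array
  is entrywise at most M_n, so M_n is the least element.  U_n differs from M_n only by -1 at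
  (2,2,2), and for n >= 4 the two increments through that entry stay admissible, so U_n is a
  corner-sum array and nothing lies strictly between M_n and U_n: U_n covers the bottom,
  hence is join-irreducible.  Since Xi^-1(Xi(A)) = A and Xi^-1(U_n) has entry -1 at (2,2,2),
  U_n is not the image of a Latin square.  In a Dedekind-MacNeille completion every element
  is determined by the elements of the subposet below it, but below U_n and below M_n lie the
  same Latin-square arrays (just M_n, if any), so C_n is not such a completion.
*)

lemma covers_bottom_down_set:
  assumes "covers_in P le y x" and "\<forall>z\<in>P. le x z" and "z \<in> P" and "le z y"
  shows "z = x \<or> z = y"
  using assms unfolding covers_in_def by blast

lemma join_irreducible_if_covers_bottom:
  assumes cover: "covers_in P le y x" and bottom: "\<forall>z\<in>P. le x z" and "antisymp le"
  shows "join_irreducible_in P le y"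
  unfolding join_irreducible_in_def
proof (intro conjI ballI impI)
  have xP: "x \<in> P" and yP: "y \<in> P" and "le x y" "x \<noteq> y"
    using cover unfolding covers_in_def by auto
  then have not_yx: "\<not> le y x"
    using \<open>antisymp le\<close> by (auto dest: antisympD)
  show "y \<in> P" by (fact yP)
  show "\<not> (\<forall>z\<in>P. le y z)" using xP not_yx by blast
  fix a b assume "a \<in> P" "b \<in> P" and lub: "is_lub_in P le {a, b} y"
  then have "a = x \<or> a = y" "b = x \<or> b = y"
    using covers_bottom_down_set[OF cover bottom] unfolding is_lub_in_def by auto
  moreover have "\<not> (a = x \<and> b = x)"
    using lub xP bottom not_yx unfolding is_lub_in_def by auto
  ultimately show "y = a \<or> y = b" by auto
qed

lemma DM_completion_down_set_inj:
  assumes DM: "is_DM_completion Q le S" and "reflp le" and "transp le"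
    and "x \<in> Q" "y \<in> Q" and same: "{s\<in>S. le s x} = {s\<in>S. le s y}"
  shows "x = y"
proof -
  obtain \<phi> where "S \<subseteq> Q" and bij: "bij_betw \<phi> Q (cuts S le)"
    and iso: "\<forall>x\<in>Q. \<forall>y\<in>Q. le x y \<longleftrightarrow> \<phi> x \<subseteq> \<phi> y"
    and principal: "\<forall>p\<in>S. \<phi> p = {s\<in>S. le s p}"
    using DM unfolding is_DM_completion_def by blast
  have \<phi>_eq: "\<phi> X = {s\<in>S. le s X}" if "X \<in> Q" for X
  proof (intro set_eqI iffI)
    fix s assume s: "s \<in> \<phi> X"
    have "\<phi> X \<in> cuts S le" using bij \<open>X \<in> Q\<close> by (auto simp: bij_betw_def)
    then have sub: "\<phi> X \<subseteq> S" and cut: "\<phi> X = lb_in S le (ub_in S le (\<phi> X))"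
      unfolding cuts_def by auto
    \<comment> \<open>A cut is closed downwards in S, so it contains the principal cut of each member.\<close>
    have "\<phi> s \<subseteq> \<phi> X"
    proof
      fix t assume "t \<in> \<phi> s"
      then have "t \<in> S" "le t s" using principal s sub by auto
      then have "t \<in> lb_in S le (ub_in S le (\<phi> X))"
        using s \<open>transp le\<close> unfolding lb_in_def ub_in_def by (blast dest: transpD)
      then show "t \<in> \<phi> X" using cut by simp
    qed
    then show "s \<in> {s\<in>S. le s X}" using iso s sub \<open>S \<subseteq> Q\<close> \<open>X \<in> Q\<close> by auto
  next
    fix s assume "s \<in> {s\<in>S. le s X}"
    then have "s \<in> S" "\<phi> s \<subseteq> \<phi> X" using iso \<open>S \<subseteq> Q\<close> \<open>X \<in> Q\<close> by auto
    moreover have "s \<in> \<phi> s" using principal \<open>s \<in> S\<close> \<open>reflp le\<close> by (auto dest: reflpD)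
    ultimately show "s \<in> \<phi> X" by auto
  qed
  have "\<phi> x = \<phi> y" using \<phi>_eq \<open>x \<in> Q\<close> \<open>y \<in> Q\<close> same by simp
  then show "x = y" using bij \<open>x \<in> Q\<close> \<open>y \<in> Q\<close> unfolding bij_betw_def inj_on_def by blast
qed

lemma not_DM_completion_if_covers_bottom:
  assumes cover: "covers_in Q le y x" and bottom: "\<forall>z\<in>Q. le x z" and "y \<notin> S"
    and "reflp le" and "transp le"
  shows "\<not> is_DM_completion Q le S"
proof
  assume DM: "is_DM_completion Q le S"
  then have "S \<subseteq> Q" unfolding is_DM_completion_def by blast
  have "x \<in> Q" "y \<in> Q" "le x y" "x \<noteq> y" using cover unfolding covers_in_def by auto
  have "{s\<in>S. le s x} = {s\<in>S. le s y}"
  proof (intro set_eqI iffI)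
    fix s assume "s \<in> {s\<in>S. le s y}"
    then have "s = x" using covers_bottom_down_set[OF cover bottom] \<open>S \<subseteq> Q\<close> \<open>y \<notin> S\<close> by auto
    then show "s \<in> {s\<in>S. le s x}" using \<open>s \<in> {s\<in>S. le s y}\<close> \<open>reflp le\<close> by (auto dest: reflpD)
  next
    fix s assume "s \<in> {s\<in>S. le s x}"
    then show "s \<in> {s\<in>S. le s y}" using \<open>le x y\<close> \<open>transp le\<close> by (auto dest: transpD)
  qed
  then show False
    using DM_completion_down_set_inj[OF DM \<open>reflp le\<close> \<open>transp le\<close> \<open>x \<in> Q\<close> \<open>y \<in> Q\<close>] \<open>x \<noteq> y\<close>
    by blast
qed

lemma le_of_increments_le:
  fixes f :: "nat \<Rightarrow> int"
  assumes "\<And>m. m \<in> {1..n} \<Longrightarrow> f m - f (m - 1) \<le> hi" and "k \<le> n"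
  shows "f k \<le> f 0 + int k * hi"
  using \<open>k \<le> n\<close>
proof (induction k)
  case (Suc k)
  then show ?case using assms(1)[of "Suc k"] by (simp add: algebra_simps)
qed simp

lemma ge_of_increments_ge:
  fixes f :: "nat \<Rightarrow> int"
  assumes "\<And>m. m \<in> {1..n} \<Longrightarrow> lo \<le> f m - f (m - 1)" and "k \<le> n"
  shows "f k + int (n - k) * lo \<le> f n"
  using \<open>k \<le> n\<close>
proof (induction k rule: inc_induct)
  case (step k)
  then show ?case using assms(1)[of "Suc k"] by (simp add: Suc_diff_Suc algebra_simps)
qed simp

lemma Mmin_symmetric_form:
  assumes "in_range n i j k"
  shows "Mmin n i j k = min (min (int k * int i) (int k * int j))
    (min (int i * int j) (int i * int j + int j * int k + int k * int i
       - int n * (int i + int j + int k) + int n * int n))"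
proof -
  have "i \<le> n" "j \<le> n" "k \<le> n" using assms by (auto simp: in_range_def)
  have "int i * int j - (int n - int k) * max 0 (int i + int j - int n)
      = min (int i * int j) (int i * int j - (int n - int k) * (int i + int j - int n))"
    using \<open>k \<le> n\<close> by (cases "i + j \<le> n") (auto simp: mult_le_0_iff)
  moreover have "int k * int (min i j) = min (int k * int i) (int k * int j)"
    by (auto simp: min_def mult_le_cancel_left)
  ultimately show ?thesis
    using assms unfolding Mmin_def by (simp add: min_def max_def algebra_simps)
qed

lemma Mmin_perm:
  assumes "i \<le> n" "j \<le> n" "k \<le> n"
  shows "Mmin n i k j = Mmin n i j k" and "Mmin n k i j = Mmin n i j k"
  using assms by (simp_all add: Mmin_symmetric_form in_range_def algebra_simps ac_simps)

lemma corner_sum_if_symmetric: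
  assumes outside: "\<And>i j k. \<not> in_range n i j k \<Longrightarrow> C i j k = 0"
    and swap: "\<And>i j k. i \<le> n \<Longrightarrow> j \<le> n \<Longrightarrow> k \<le> n \<Longrightarrow> C i k j = C i j k"
    and rotate: "\<And>i j k. i \<le> n \<Longrightarrow> j \<le> n \<Longrightarrow> k \<le> n \<Longrightarrow> C k i j = C i j k"
    and start: "\<And>i j. i \<le> n \<Longrightarrow> j \<le> n \<Longrightarrow> C i j 0 = 0"
    and finish: "\<And>i j. i \<le> n \<Longrightarrow> j \<le> n \<Longrightarrow> C i j n = int (i * j)"
    and step: "\<And>i j k. i \<le> n \<Longrightarrow> j \<le> n \<Longrightarrow> k \<in> {1..n}
      \<Longrightarrow> step_ok n i j (C i j k - C i j (k - 1))"
  shows "C \<in> CS n"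
  unfolding CS_def corner_sum_def
proof (intro CollectI conjI allI impI ballI)
  fix i j k
  show "\<not> in_range n i j k \<Longrightarrow> C i j k = 0" by (fact outside)
  assume "i \<le> n" "j \<le> n"
  then show "C i j 0 = 0" "C i 0 j = 0" "C 0 i j = 0"
    and "C i j n = int (i * j)" "C i n j = int (i * j)" "C n i j = int (i * j)"
    using start finish swap[of i j 0] rotate[of i j 0] swap[of i j n] rotate[of i j n] by auto
  assume "k \<in> {1..n}"
  then show "step_ok n i j (C i j k - C i j (k - 1))"
    and "step_ok n i j (C i k j - C i (k - 1) j)"
    and "step_ok n i j (C k i j - C (k - 1) i j)"
    using step[of i j k] swap[of i j k] rotate[of i j k] swap[of i j "k - 1"] rotate[of i j "k - 1"]
      \<open>i \<le> n\<close> \<open>j \<le> n\<close>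
    by auto
qed

lemma Mmin_start: "i \<le> n \<Longrightarrow> j \<le> n \<Longrightarrow> Mmin n i j 0 = 0"
proof -
  assume "i \<le> n" "j \<le> n"
  have "int i * int j - int n * (int i + int j - int n) = (int n - int i) * (int n - int j)"
    by (simp add: algebra_simps)
  then show ?thesis
    using \<open>i \<le> n\<close> \<open>j \<le> n\<close> by (auto simp: Mmin_def in_range_def max_def)
qed

lemma Mmin_finish:
  assumes "i \<le> n" "j \<le> n"
  shows "Mmin n i j n = int (i * j)"
proof -
  have "i * j \<le> n * min i j"
    using assms by (cases "i \<le> j") (simp_all add: mult.commute mult_le_mono)
  then have "int i * int j \<le> int n * int (min i j)"
    by (metis of_nat_le_iff of_nat_mult)
  then show ?thesis using assms by (simp add: Mmin_def in_range_def)
qed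

lemma Mmin_step:
  assumes "i \<le> n" "j \<le> n" "k \<in> {1..n}"
  shows "step_ok n i j (Mmin n i j k - Mmin n i j (k - 1))"
proof -
  define hi where "hi = int (min i j)"
  define lo where "lo = max 0 (int i + int j - int n)"
  have "0 \<le> lo" "lo \<le> hi" using assms unfolding hi_def lo_def by auto
  have "Mmin n i j k = min (int k * hi) (int (i * j) - (int n - int k) * lo)"
    and "Mmin n i j (k - 1) = min (int k * hi - hi) (int (i * j) - (int n - int k) * lo - lo)"
    using assms unfolding Mmin_def in_range_def hi_def lo_def by (auto simp: of_nat_diff algebra_simps)
  then show ?thesis
    using \<open>lo \<le> hi\<close> unfolding step_ok_def lo_def[symmetric] hi_def[symmetric] by (auto simp: min_def)
qed

lemma Mmin_outside: "\<not> in_range n i j k \<Longrightarrow> Mmin n i j k = 0"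
  by (simp add: Mmin_def)

lemma Mmin_in_CS: "Mmin n \<in> CS n"
  using Mmin_outside Mmin_perm Mmin_start Mmin_finish Mmin_step by (rule corner_sum_if_symmetric)

lemma Mmin_least: "C \<in> CS n \<Longrightarrow> C \<le> Mmin n"
proof (rule le_funI)+
  fix i j k assume "C \<in> CS n"
  show "C i j k \<le> Mmin n i j k"
  proof (cases "in_range n i j k")
    case False
    then show ?thesis using \<open>C \<in> CS n\<close> by (simp add: CS_def corner_sum_def Mmin_def)
  next
    case True
    then have "i \<le> n" "j \<le> n" "k \<le> n" by (auto simp: in_range_def)
    then have line: "C i j 0 = 0" "C i j n = int (i * j)"
      "\<And>m. m \<in> {1..n} \<Longrightarrow> step_ok n i j (C i j m - C i j (m - 1))"
      using \<open>C \<in> CS n\<close> unfolding CS_def corner_sum_def by auto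
    have "C i j k \<le> int k * int (min i j)"
      using le_of_increments_le[of n "C i j" "int (min i j)" k] line \<open>k \<le> n\<close>
      by (simp add: step_ok_def)
    moreover have "C i j k \<le> int (i * j) - (int n - int k) * max 0 (int i + int j - int n)"
      using ge_of_increments_ge[of n "max 0 (int i + int j - int n)" "C i j" k] line \<open>k \<le> n\<close>
      by (simp add: step_ok_def of_nat_diff)
    ultimately show ?thesis using True by (simp add: Mmin_def)
  qed
qed

lemma Uarr_in_CS:
  assumes "n \<ge> 4"
  shows "Uarr n \<in> CS n"
proof (rule corner_sum_if_symmetric)
  fix i j k
  show "\<not> in_range n i j k \<Longrightarrow> Uarr n i j k = 0"
    using assms by (auto simp: Uarr_def Mmin_outside in_range_def)
  assume "i \<le> n" "j \<le> n"
  then show "Uarr n i j 0 = 0" "Uarr n i j n = int (i * j)"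
    using assms by (auto simp: Uarr_def Mmin_start Mmin_finish)
  show "k \<le> n \<Longrightarrow> Uarr n i k j = Uarr n i j k" "k \<le> n \<Longrightarrow> Uarr n k i j = Uarr n i j k"
    using \<open>i \<le> n\<close> \<open>j \<le> n\<close> by (auto simp: Uarr_def Mmin_perm)
  assume "k \<in> {1..n}"
  show "step_ok n i j (Uarr n i j k - Uarr n i j (k - 1))"
  proof (cases "i = 2 \<and> j = 2 \<and> k \<in> {2, 3}")
    case True
    \<comment> \<open>Along this line M has values 2, 4, 4 at k = 1, 2, 3, so both increments become 1.\<close>
    then show ?thesis using assms by (auto simp: Uarr_def Mmin_def in_range_def step_ok_def)
  next
    case False
    then show ?thesis
      using Mmin_step[OF \<open>i \<le> n\<close> \<open>j \<le> n\<close> \<open>k \<in> {1..n}\<close>] by (auto simp: Uarr_def)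
  qed
qed

lemma Uarr_le_Mmin: "Uarr n \<le> Mmin n"
  by (simp add: le_fun_def Uarr_def)

lemma Uarr_ne_Mmin: "Uarr n \<noteq> Mmin n"
proof
  assume "Uarr n = Mmin n"
  then have "Uarr n 2 2 2 = Mmin n 2 2 2" by simp
  then show False by (simp add: Uarr_def)
qed

lemma between_Uarr_Mmin:
  assumes "C \<in> CS n" and "Uarr n \<le> C"
  shows "C = Uarr n \<or> C = Mmin n"
proof -
  have "Uarr n i j k \<le> C i j k" "C i j k \<le> Mmin n i j k" for i j k
    using assms Mmin_least by (auto simp: le_fun_def)
  note bounds = this
  show ?thesis
  proof (cases "C 2 2 2 = Mmin n 2 2 2")
    case True
    have "C i j k = Mmin n i j k" for i j k
      using bounds[of i j k] True by (cases "(i, j, k) = (2, 2, 2)") (auto simp: Uarr_def)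
    then show ?thesis by blast
  next
    case False
    have "C i j k = Uarr n i j k" for i j k
      using bounds[of i j k] bounds[of 2 2 2] False
      by (cases "(i, j, k) = (2, 2, 2)") (auto simp: Uarr_def)
    then show ?thesis by blast
  qed
qed

lemma prec_eq_ge: "prec = (\<ge>)"
  by (intro ext) (simp add: prec_def le_fun_def)

lemma Mmin_bottom: "\<forall>C\<in>CS n. prec (Mmin n) C"
  using Mmin_least by (simp add: prec_eq_ge)

lemma Uarr_covers_Mmin:
  assumes "n \<ge> 4"
  shows "covers_in (CS n) prec (Uarr n) (Mmin n)"
  unfolding covers_in_def prec_eq_ge
  using Uarr_in_CS[OF assms] Mmin_in_CS Uarr_le_Mmin Uarr_ne_Mmin between_Uarr_Mmin by metis

lemma Xi_inv_Xi:
  assumes "i \<in> {1..n}" "j \<in> {1..n}" "k \<in> {1..n}"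
  shows "Xi_inv (Xi n A) i j k = A i j k"
proof -
  obtain i' j' k' where "i = Suc i'" "j = Suc j'" "k = Suc k'"
    using assms by (metis atLeastAtMost_iff not0_implies_Suc not_one_le_zero)
  then show ?thesis
    using assms unfolding Xi_inv_def Xi_def in_range_def
    by (simp add: sum.cl_ivl_Suc sum.distrib)
qed

lemma Xi_inv_Uarr:
  assumes "n \<ge> 4"
  shows "Xi_inv (Uarr n) 2 2 2 = -1"
  using assms by (simp add: Xi_inv_def Uarr_def Mmin_def in_range_def max_def)

lemma Uarr_ne_Xi_Hmat:
  assumes "n \<ge> 4"
  shows "Uarr n \<noteq> Xi n (Hmat L)"
proof
  assume "Uarr n = Xi n (Hmat L)"
  then have "Hmat L 2 2 2 = -1"
    using Xi_inv_Uarr[OF assms] Xi_inv_Xi[of 2 n 2 2 "Hmat L"] assms by simp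
  then show False by (simp add: Hmat_def split: if_splits)
qed

theorem mainTheorem16:
  fixes n :: nat
  assumes "n \<ge> 4"
  shows "Uarr n \<in> CS n
    \<and> covers_in (CS n) prec (Uarr n) (Mmin n)
    \<and> join_irreducible_in (CS n) prec (Uarr n)
    \<and> Xi_inv (Uarr n) 2 2 2 = -1
    \<and> (\<forall>L. latin_square n L \<longrightarrow> Uarr n \<noteq> Xi n (Hmat L))
    \<and> \<not> is_DM_completion (CS n) prec {Xi n (Hmat L) | L. latin_square n L}"
proof (intro conjI allI impI)
  show "Uarr n \<in> CS n" using assms by (rule Uarr_in_CS)
  show cover: "covers_in (CS n) prec (Uarr n) (Mmin n)" using assms by (rule Uarr_covers_Mmin)
  show "join_irreducible_in (CS n) prec (Uarr n)"
    using cover Mmin_bottom by (rule join_irreducible_if_covers_bottom) (simp add: prec_eq_ge)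
  show "Xi_inv (Uarr n) 2 2 2 = -1" using assms by (rule Xi_inv_Uarr)
  show "Uarr n \<noteq> Xi n (Hmat L)" for L using assms by (rule Uarr_ne_Xi_Hmat)
  have "Uarr n \<notin> {Xi n (Hmat L) | L. latin_square n L}"
    using Uarr_ne_Xi_Hmat[OF assms] by blast
  with cover Mmin_bottom show "\<not> is_DM_completion (CS n) prec {Xi n (Hmat L) | L. latin_square n L}"
    by (rule not_DM_completion_if_covers_bottom) (simp_all add: prec_eq_ge)
qed

end
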